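(* Consider the discrete first-price auction in the model with ties with $n=2$ bidders whose values are drawn independently and uniformly from $X=\{0,1,\dots,x\}$, where $x\ge10$. If $\beta$ is a symmetric equilibrium, then $\beta(v)=\lfloor v/2\rfloor$ for all $v\in X$. Consequently, if moreover $x$ is even, the auction has no symmetric equilibrium.
   Context: Model. Two risk-neutral bidders compete for one indivisible object. Values and bids lie in $X=\{0,1,2,\dots,x\}$; each bidder's value is drawn independently and uniformly from $X$. A (pure) strategy is a bidding function $\beta:X\to X$. In the model with ties, the higher bidder wins and, if the two bids are equal, each wins with probability $1/2$. In the first-price auction, a bidder with value $v_i$ bidding $b_i$ gets expected payoff $(v_i-b_i)\Pr(i\text{ wins})$. An equilibrium is a profile of bidding functions such that each bidder's bidding function maximises their expected payoff given the other's (a pure-strategy Bayes–Nash equilibrium) and such that no bidder uses a weakly dominated bidding function (a bidding function is weakly dominated if some other bidding function yields at least as high expected payoff against every opponent bidding function, and strictly higher against some). A symmetric equilibrium is an equilibrium in which both bidders use the same bidding function. *)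

theory Defs
  imports Complex_Main
begin

text \<open>Values and bids lie in X = {0..x}. A bidding function is a map nat => nat
  sending X into X (values outside X are irrelevant).\<close>

definition strategy :: "nat \<Rightarrow> (nat \<Rightarrow> nat) \<Rightarrow> bool" where
  "strategy x \<beta> \<longleftrightarrow> (\<forall>v\<le>x. \<beta> v \<le> x)"

text \<open>Probability that a bid b wins against an opponent using bidding function \<gamma>
  whose value is uniform on X; ties are broken by a fair coin.\<close>

definition win_prob :: "nat \<Rightarrow> nat \<Rightarrow> (nat \<Rightarrow> nat) \<Rightarrow> real" where
  "win_prob x b \<gamma> =
     (real (card {w \<in> {0..x}. \<gamma> w < b}) + real (card {w \<in> {0..x}. \<gamma> w = b}) / 2)
     / real (x + 1)"

definition interim_payoff :: "nat \<Rightarrow> nat \<Rightarrow> nat \<Rightarrow> (nat \<Rightarrow> nat) \<Rightarrow> real" where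
  "interim_payoff x v b \<gamma> = (real v - real b) * win_prob x b \<gamma>"

definition payoff :: "nat \<Rightarrow> (nat \<Rightarrow> nat) \<Rightarrow> (nat \<Rightarrow> nat) \<Rightarrow> real" where
  "payoff x \<beta> \<gamma> = (\<Sum>v=0..x. interim_payoff x v (\<beta> v) \<gamma>) / real (x + 1)"

definition best_response :: "nat \<Rightarrow> (nat \<Rightarrow> nat) \<Rightarrow> (nat \<Rightarrow> nat) \<Rightarrow> bool" where
  "best_response x \<beta> \<gamma> \<longleftrightarrow> strategy x \<beta> \<and>
     (\<forall>\<beta>'. strategy x \<beta>' \<longrightarrow> payoff x \<beta>' \<gamma> \<le> payoff x \<beta> \<gamma>)"

definition weakly_dominated :: "nat \<Rightarrow> (nat \<Rightarrow> nat) \<Rightarrow> bool" where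
  "weakly_dominated x \<beta> \<longleftrightarrow> (\<exists>\<beta>'. strategy x \<beta>' \<and>
     (\<forall>\<gamma>. strategy x \<gamma> \<longrightarrow> payoff x \<beta> \<gamma> \<le> payoff x \<beta>' \<gamma>) \<and>
     (\<exists>\<gamma>. strategy x \<gamma> \<and> payoff x \<beta> \<gamma> < payoff x \<beta>' \<gamma>))"

definition equilibrium :: "nat \<Rightarrow> (nat \<Rightarrow> nat) \<Rightarrow> (nat \<Rightarrow> nat) \<Rightarrow> bool" where
  "equilibrium x \<beta>1 \<beta>2 \<longleftrightarrow>
     best_response x \<beta>1 \<beta>2 \<and> best_response x \<beta>2 \<beta>1 \<and>
     \<not> weakly_dominated x \<beta>1 \<and> \<not> weakly_dominated x \<beta>2"

definition symmetric_equilibrium :: "nat \<Rightarrow> (nat \<Rightarrow> nat) \<Rightarrow> bool" where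
  "symmetric_equilibrium x \<beta> \<longleftrightarrow> equilibrium x \<beta> \<beta>"

end

theory Submission
  imports Defs
begin

text \<open>Write \<open>L b\<close> for the number of values whose bid is below \<open>b\<close>. Against a bidding
  function, a bid \<open>b\<close> wins with probability \<open>(L b + L (b + 1)) / (2 (x + 1))\<close>, so every
  best-response condition compares margins times such sums. Non-domination rules
  out bidding one's value or more, and comparing two values whose bids cross shows that
  equilibrium bids are monotone. By induction, the values \<open>2k\<close> and \<open>2k + 1\<close> are then forced
  to bid \<open>k\<close>: for every other candidate bid, a nearby value gains by moving its bid one step.
  When \<open>x = 2k\<close> is even, the same comparison makes the top value prefer \<open>k - 1\<close> to \<open>k\<close>.\<close>

definition count_below :: "nat \<Rightarrow> (nat \<Rightarrow> nat) \<Rightarrow> nat \<Rightarrow> nat" where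
  "count_below x \<gamma> b = card {w \<in> {0..x}. \<gamma> w < b}"

lemma count_below_Suc:
  "count_below x \<gamma> (Suc b) = count_below x \<gamma> b + card {w \<in> {0..x}. \<gamma> w = b}"
proof -
  have "{w \<in> {0..x}. \<gamma> w < Suc b} = {w \<in> {0..x}. \<gamma> w < b} \<union> {w \<in> {0..x}. \<gamma> w = b}"
    by auto
  moreover have "card ({w \<in> {0..x}. \<gamma> w < b} \<union> {w \<in> {0..x}. \<gamma> w = b}) =
      card {w \<in> {0..x}. \<gamma> w < b} + card {w \<in> {0..x}. \<gamma> w = b}"
    by (rule card_Un_disjoint) auto
  ultimately show ?thesis
    unfolding count_below_def by simp
qed

lemma win_prob_count_below:
  "win_prob x b \<gamma> =
     (real (count_below x \<gamma> b) + real (count_below x \<gamma> (Suc b))) / (2 * real (x + 1))"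
  unfolding win_prob_def count_below_Suc count_below_def[symmetric] by (simp add: field_simps)

lemma count_below_mono: "b \<le> b' \<Longrightarrow> count_below x \<gamma> b \<le> count_below x \<gamma> b'"
  unfolding count_below_def by (rule card_mono) auto

lemma count_below_ge:
  assumes "s \<le> x + 1" and "\<And>w. w < s \<Longrightarrow> \<gamma> w < b"
  shows "s \<le> count_below x \<gamma> b"
proof -
  have "card {0..<s} \<le> count_below x \<gamma> b"
    unfolding count_below_def by (rule card_mono) (use assms in auto)
  then show ?thesis by simp
qed

lemma count_below_all: "(\<And>w. w \<le> x \<Longrightarrow> \<gamma> w < b) \<Longrightarrow> count_below x \<gamma> b = x + 1"
proof -
  assume "\<And>w. w \<le> x \<Longrightarrow> \<gamma> w < b"
  then have "{w \<in> {0..x}. \<gamma> w < b} = {0..x}" by auto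
  then show ?thesis unfolding count_below_def by simp
qed

lemma count_below_Suc_bid: "v \<le> x \<Longrightarrow> count_below x \<gamma> (\<gamma> v) < count_below x \<gamma> (Suc (\<gamma> v))"
proof -
  assume "v \<le> x"
  then have "card {v} \<le> card {w \<in> {0..x}. \<gamma> w = \<gamma> v}"
    by (intro card_mono) auto
  then show ?thesis
    unfolding count_below_Suc by simp
qed

lemma count_below_eq_if_mono:
  assumes mono: "mono_on {..x} \<gamma>" and "s \<le> x"
    and below: "\<And>w. w < s \<Longrightarrow> \<gamma> w < b" and "b \<le> \<gamma> s"
  shows "count_below x \<gamma> b = s"
proof -
  have "{w \<in> {0..x}. \<gamma> w < b} = {0..<s}"
  proof (intro set_eqI iffI)
    fix w assume w: "w \<in> {w \<in> {0..x}. \<gamma> w < b}"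
    show "w \<in> {0..<s}"
    proof (rule ccontr)
      assume "w \<notin> {0..<s}"
      then have "\<gamma> s \<le> \<gamma> w"
        using w \<open>s \<le> x\<close> by (intro mono_onD[OF mono]) auto
      with w \<open>b \<le> \<gamma> s\<close> show False by simp
    qed
  qed (use below \<open>s \<le> x\<close> in auto)
  then show ?thesis
    unfolding count_below_def by simp
qed

lemma pooling_if_count_below_Suc_gt:
  assumes mono: "mono_on {..x} \<gamma>" and "s \<le> x"
    and many: "s + d < count_below x \<gamma> (Suc (\<gamma> s))"
  shows "s + d \<le> x \<and> \<gamma> (s + d) = \<gamma> s"
proof (rule ccontr)
  assume not_pooled: "\<not> (s + d \<le> x \<and> \<gamma> (s + d) = \<gamma> s)"
  have "{w \<in> {0..x}. \<gamma> w < Suc (\<gamma> s)} \<subseteq> {0..<s + d}"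
  proof
    fix w assume w: "w \<in> {w \<in> {0..x}. \<gamma> w < Suc (\<gamma> s)}"
    show "w \<in> {0..<s + d}"
    proof (rule ccontr)
      assume "w \<notin> {0..<s + d}"
      with w have "s + d \<le> w" "w \<le> x" by auto
      then have "\<gamma> s \<le> \<gamma> (s + d)" "\<gamma> (s + d) \<le> \<gamma> w"
        by (auto intro: mono_onD[OF mono])
      with w not_pooled \<open>s + d \<le> w\<close> \<open>w \<le> x\<close> show False by auto
    qed
  qed
  then have "count_below x \<gamma> (Suc (\<gamma> s)) \<le> s + d"
    unfolding count_below_def using card_mono[of "{0..<s + d}"] by fastforce
  with many show False by simp
qed

lemma payoff_fun_upd:
  assumes "v \<le> x"
  shows "payoff x (\<beta>(v := b)) \<gamma> =
    payoff x \<beta> \<gamma> + (interim_payoff x v b \<gamma> - interim_payoff x v (\<beta> v) \<gamma>) / real (x + 1)"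
proof -
  have v: "v \<in> {0..x}" using assms by simp
  have "(\<Sum>u\<in>{0..x} - {v}. interim_payoff x u ((\<beta>(v := b)) u) \<gamma>) =
      (\<Sum>u\<in>{0..x} - {v}. interim_payoff x u (\<beta> u) \<gamma>)"
    by (rule sum.cong) auto
  then have "(\<Sum>u=0..x. interim_payoff x u ((\<beta>(v := b)) u) \<gamma>) =
      (\<Sum>u=0..x. interim_payoff x u (\<beta> u) \<gamma>) + interim_payoff x v b \<gamma> - interim_payoff x v (\<beta> v) \<gamma>"
    using sum.remove[OF _ v, of "\<lambda>u. interim_payoff x u ((\<beta>(v := b)) u) \<gamma>"]
      sum.remove[OF _ v, of "\<lambda>u. interim_payoff x u (\<beta> u) \<gamma>"] by simp
  then show ?thesis
    unfolding payoff_def by (simp add: add_divide_distrib diff_divide_distrib)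
qed

lemma win_prob_nonneg: "0 \<le> win_prob x b \<gamma>"
  unfolding win_prob_def by simp

locale symmetric_eq =
  fixes x :: nat and \<beta> :: "nat \<Rightarrow> nat"
  assumes symmetric_equilibrium: "symmetric_equilibrium x \<beta>"
begin

abbreviation L :: "nat \<Rightarrow> real" where
  "L b \<equiv> real (count_below x \<beta> b)"

lemma best_response: "best_response x \<beta> \<beta>"
  using symmetric_equilibrium unfolding symmetric_equilibrium_def equilibrium_def by simp

lemma not_weakly_dominated: "\<not> weakly_dominated x \<beta>"
  using symmetric_equilibrium unfolding symmetric_equilibrium_def equilibrium_def by simp

lemma strategy: "strategy x \<beta>"
  using best_response unfolding best_response_def by simp

lemma bid_le: "v \<le> x \<Longrightarrow> \<beta> v \<le> x"
  using strategy unfolding strategy_def by simp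

lemma no_profitable_deviation:
  assumes "v \<le> x" and "b \<le> x"
  shows "(real v - real b) * (L b + L (Suc b)) \<le> (real v - real (\<beta> v)) * (L (\<beta> v) + L (Suc (\<beta> v)))"
proof -
  have "strategy x (\<beta>(v := b))"
    using strategy assms unfolding strategy_def by auto
  then have "payoff x (\<beta>(v := b)) \<beta> \<le> payoff x \<beta> \<beta>"
    using best_response unfolding best_response_def by blast
  then have "interim_payoff x v b \<beta> \<le> interim_payoff x v (\<beta> v) \<beta>"
    unfolding payoff_fun_upd[OF assms(1)] by (simp add: divide_le_0_iff)
  then have "(real v - real b) * (L b + L (Suc b)) / (2 * real (x + 1)) \<le>
      (real v - real (\<beta> v)) * (L (\<beta> v) + L (Suc (\<beta> v))) / (2 * real (x + 1))"
    unfolding interim_payoff_def win_prob_count_below by simp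
  then show ?thesis
    by (simp add: divide_le_cancel)
qed

text \<open>Bidding one less than one's value is never worse, and is strictly better against an
  opponent who always bids 0.\<close>

lemma bid_less_value:
  assumes "1 \<le> v" and "v \<le> x"
  shows "\<beta> v < v"
proof (rule ccontr)
  assume "\<not> \<beta> v < v"
  define \<beta>' where "\<beta>' = \<beta>(v := v - 1)"
  have "strategy x \<beta>'"
    using strategy assms unfolding strategy_def \<beta>'_def by auto
  have loss: "interim_payoff x v (\<beta> v) \<gamma> \<le> 0" for \<gamma>
    unfolding interim_payoff_def using \<open>\<not> \<beta> v < v\<close> win_prob_nonneg[of x "\<beta> v" \<gamma>]
    by (simp add: mult_nonpos_nonneg)
  have gain: "0 \<le> interim_payoff x v (v - 1) \<gamma>" for \<gamma>
    unfolding interim_payoff_def using assms(1) win_prob_nonneg[of x "v - 1" \<gamma>] by simp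
  have "payoff x \<beta> \<gamma> \<le> payoff x \<beta>' \<gamma>" for \<gamma>
    unfolding \<beta>'_def payoff_fun_upd[OF assms(2)] using loss[of \<gamma>] gain[of \<gamma>] by simp
  moreover have "strategy x (\<lambda>_. 0)"
    unfolding strategy_def by simp
  moreover have "payoff x \<beta> (\<lambda>_. 0) < payoff x \<beta>' (\<lambda>_. 0)"
  proof -
    have "count_below x (\<lambda>_. 0) (Suc (v - 1)) = x + 1"
      by (rule count_below_all) simp
    then have "0 < interim_payoff x v (v - 1) (\<lambda>_. 0)"
      unfolding interim_payoff_def win_prob_count_below using assms(1) by simp
    then show ?thesis
      unfolding \<beta>'_def payoff_fun_upd[OF assms(2)] using loss[of "\<lambda>_. 0"] by simp
  qed
  ultimately have "weakly_dominated x \<beta>"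
    unfolding weakly_dominated_def using \<open>strategy x \<beta>'\<close> by blast
  with not_weakly_dominated show False by simp
qed

lemma mono_on_bids: "mono_on {..x} \<beta>"
proof (rule mono_onI, rule ccontr)
  fix v v' assume v: "v \<in> {..x}" and v': "v' \<in> {..x}" and "v \<le> v'" and "\<not> \<beta> v \<le> \<beta> v'"
  define b b' where "b = \<beta> v" and "b' = \<beta> v'"
  have "b' < b" and "v < v'"
    using \<open>\<not> \<beta> v \<le> \<beta> v'\<close> \<open>v \<le> v'\<close> unfolding b_def b'_def by (auto simp: le_less)
  have "(real v - real b') * (L b' + L (Suc b')) \<le> (real v - real b) * (L b + L (Suc b))"
    using no_profitable_deviation[of v b'] v v' bid_le unfolding b_def b'_def by simp
  moreover have "(real v' - real b) * (L b + L (Suc b)) \<le> (real v' - real b') * (L b' + L (Suc b'))"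
    using no_profitable_deviation[of v' b] v v' bid_le unfolding b_def b'_def by simp
  ultimately have "(real v' - real v) * ((L b + L (Suc b)) - (L b' + L (Suc b'))) \<le> 0"
    by (simp add: algebra_simps)
  with \<open>v < v'\<close> have "L b + L (Suc b) \<le> L b' + L (Suc b')"
    by (simp add: mult_le_0_iff)
  moreover have "L (Suc b') \<le> L b" "L b \<le> L (Suc b)"
    using count_below_mono[of _ _ x \<beta>] \<open>b' < b\<close> by simp_all
  moreover have "L b' < L (Suc b')"
    using count_below_Suc_bid[of v' x \<beta>] v' unfolding b'_def by simp
  ultimately show False by simp
qed

text \<open>If all lower values bid at most \<open>\<beta> s - 2\<close>, then \<open>s\<close> is kept from shading its bid
  to \<open>\<beta> s - 1\<close> only by more than four further values pooling at \<open>\<beta> s\<close>; but then the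
  value \<open>s + 4\<close> prefers the bid \<open>\<beta> s + 1\<close>.\<close>

lemma no_bid_jump:
  assumes "s \<le> x" and "0 < s" and "s < 2 * \<beta> s"
    and below: "\<And>w. w < s \<Longrightarrow> \<beta> w + 1 < \<beta> s"
  shows False
proof -
  have "1 \<le> \<beta> s"
    using assms(2,3) by simp
  define b where "b = \<beta> s"
  have "b < s"
    using bid_less_value[of s] assms unfolding b_def by simp
  have "\<beta> w < b - 1" "\<beta> w < b" if "w < s" for w
    using below[OF that] unfolding b_def by simp_all
  then have L_b: "L (b - 1) = real s" "L b = real s"
    using \<open>1 \<le> \<beta> s\<close> \<open>s \<le> x\<close> unfolding b_def
    by (auto intro!: count_below_eq_if_mono[OF mono_on_bids])
  define D c where "D = real s - real b" and "c = L (Suc b) - real s"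
  have "0 < D"
    using \<open>b < s\<close> unfolding D_def by simp
  have "2 * D < real s"
    using assms(3) unfolding D_def b_def by simp
  have "(real s - real (b - 1)) * (L (b - 1) + L (Suc (b - 1))) \<le>
      (real s - real b) * (L b + L (Suc b))"
    using no_profitable_deviation[of s "b - 1"] \<open>s \<le> x\<close> \<open>b < s\<close> unfolding b_def by simp
  then have "(D + 1) * (2 * real s) \<le> D * (2 * real s + c)"
    using L_b \<open>1 \<le> \<beta> s\<close> unfolding D_def c_def b_def by (simp add: of_nat_diff algebra_simps)
  then have shade: "2 * real s \<le> D * c"
    by (simp add: algebra_simps)
  have "4 < c"
  proof (rule ccontr)
    assume "\<not> 4 < c"
    then have "D * c \<le> D * 4"
      using \<open>0 < D\<close> by (intro mult_left_mono) auto
    with shade \<open>2 * D < real s\<close> show False by linarith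
  qed
  then have "s + 4 < count_below x \<beta> (Suc (\<beta> s))"
    unfolding c_def b_def by linarith
  then have "s + 4 \<le> x" and pooled: "\<beta> (s + 4) = b"
    using pooling_if_count_below_Suc_gt[OF mono_on_bids \<open>s \<le> x\<close>] unfolding b_def by auto
  then have "Suc b \<le> x"
    using bid_less_value[of "s + 4"] by simp
  have "(real (s + 4) - real (Suc b)) * (L (Suc b) + L (Suc (Suc b))) \<le>
      (real (s + 4) - real b) * (L b + L (Suc b))"
    using no_profitable_deviation[OF \<open>s + 4 \<le> x\<close> \<open>Suc b \<le> x\<close>] pooled by simp
  moreover have "(D + 3) * (2 * (real s + c)) \<le> (D + 3) * (L (Suc b) + L (Suc (Suc b)))"
    using count_below_mono[of "Suc b" "Suc (Suc b)" x \<beta>] \<open>0 < D\<close> unfolding c_def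
    by (intro mult_left_mono) auto
  ultimately have "(D + 3) * (2 * (real s + c)) \<le> (D + 4) * (2 * real s + c)"
    using L_b unfolding D_def c_def by (simp add: algebra_simps)
  then have "D * c + 2 * c \<le> 2 * real s"
    by (simp add: algebra_simps)
  with shade \<open>4 < c\<close> show False by linarith
qed

lemma count_below_half:
  assumes half_below: "\<forall>v < 2 * k. \<beta> v = v div 2" and "j < k" and "2 * j \<le> x"
  shows "count_below x \<beta> j = 2 * j"
  using assms by (intro count_below_eq_if_mono[OF mono_on_bids]) auto

lemma bid_double_ne_pred_of_five_le:
  assumes "5 \<le> k" and half_below: "\<forall>v < 2 * k. \<beta> v = v div 2" and "2 * k \<le> x"
  shows "\<beta> (2 * k) \<noteq> k - 1"
proof
  assume "\<beta> (2 * k) = k - 1"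
  define K where "K = real k"
  have L_pred: "L (k - 2) = 2 * K - 4" "L (k - 1) = 2 * K - 2"
    using count_below_half[OF half_below, of "k - 2"] count_below_half[OF half_below, of "k - 1"]
      assms(1,3) unfolding K_def by (simp_all add: of_nat_diff)
  have "2 * k + 1 \<le> count_below x \<beta> k"
    using half_below \<open>\<beta> (2 * k) = k - 1\<close> assms(1,3)
    by (intro count_below_ge) (auto simp: less_Suc_eq)
  then have L_half: "(K - 2) * (2 * K + 1) \<le> (K - 2) * L k"
    using assms(1) unfolding K_def by (intro mult_left_mono) auto
  have "\<beta> (2 * k - 3) = k - 2"
    using half_below assms(1) by (simp add: nat_diff_distrib)
  then have "(real (2 * k - 3) - real (k - 1)) * (L (k - 1) + L (Suc (k - 1))) \<le>
      (real (2 * k - 3) - real (k - 2)) * (L (k - 2) + L (Suc (k - 2)))"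
    using no_profitable_deviation[of "2 * k - 3" "k - 1"] assms(3) by simp
  moreover have "real (2 * k - 3) - real (k - 1) = K - 2" "real (2 * k - 3) - real (k - 2) = K - 1"
    "Suc (k - 1) = k" "Suc (k - 2) = k - 1"
    using assms(1) unfolding K_def by (simp_all add: of_nat_diff)
  ultimately have "(K - 2) * (2 * K - 2 + L k) \<le> (K - 1) * (4 * K - 6)"
    using L_pred by (simp add: algebra_simps)
  with L_half have "(K - 2) * (4 * K - 1) \<le> (K - 1) * (4 * K - 6)"
    by (simp add: algebra_simps)
  then have "K \<le> 4"
    by (simp add: algebra_simps)
  with assms(1) show False
    unfolding K_def by simp
qed

lemma no_bid_half_if_bid_double_pred:
  assumes "1 \<le> k" and half_below: "\<forall>v < 2 * k. \<beta> v = v div 2" and "2 * k \<le> x"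
    and "\<beta> (2 * k) = k - 1"
  shows "count_below x \<beta> (Suc k) = count_below x \<beta> k"
proof -
  define K where "K = real k"
  have L_pred: "L (k - 1) = 2 * K - 2"
    using count_below_half[OF half_below, of "k - 1"] assms(1,3) unfolding K_def
    by (simp add: of_nat_diff)
  have "2 * k + 1 \<le> count_below x \<beta> k"
    using half_below assms(1,3,4) by (intro count_below_ge) (auto simp: less_Suc_eq)
  then have "(K - 1) * (2 * K + 1) \<le> (K - 1) * L k"
    using assms(1) unfolding K_def by (intro mult_left_mono) auto
  moreover have "(real (2 * k) - real k) * (L k + L (Suc k)) \<le>
      (real (2 * k) - real (k - 1)) * (L (k - 1) + L (Suc (k - 1)))"
    using no_profitable_deviation[of "2 * k" k] assms(3,4) by simp
  then have "K * (L k + L (Suc k)) \<le> (K + 1) * (2 * K - 2 + L k)"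
    using assms(1) L_pred unfolding K_def by (simp add: of_nat_diff)
  ultimately have "K * (L (Suc k) - L k) < K * 1"
    by (simp add: algebra_simps)
  then have "L (Suc k) < L k + 1"
    using assms(1) unfolding K_def by (simp add: mult_less_cancel_left_pos)
  then show ?thesis
    using count_below_mono[of k "Suc k" x \<beta>] by linarith
qed

lemma bid_double_Suc_ne_pred:
  assumes "1 \<le> k" and half_below: "\<forall>v < 2 * k. \<beta> v = v div 2" and "2 * k + 1 \<le> x"
    and "\<beta> (2 * k) = k - 1"
  shows "\<beta> (2 * k + 1) \<noteq> k - 1"
proof
  assume "\<beta> (2 * k + 1) = k - 1"
  define K where "K = real k"
  have "2 * k + 2 \<le> count_below x \<beta> k"
    using half_below assms(1,3,4) \<open>\<beta> (2 * k + 1) = k - 1\<close>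
    by (intro count_below_ge) (auto simp: less_Suc_eq)
  then have "K * (2 * K + 2) \<le> K * L k"
    unfolding K_def by (intro mult_left_mono) auto
  moreover have "(real (2 * k + 1) - real k) * (L k + L (Suc k)) \<le>
      (real (2 * k + 1) - real (k - 1)) * (L (k - 1) + L (Suc (k - 1)))"
    using no_profitable_deviation[of "2 * k + 1" k] assms(3) \<open>\<beta> (2 * k + 1) = k - 1\<close> by simp
  then have "(K + 1) * (2 * L k) \<le> (K + 2) * (2 * K - 2 + L k)"
    using count_below_half[OF half_below, of "k - 1"] assms(1,3)
      no_bid_half_if_bid_double_pred[OF assms(1) half_below _ assms(4)]
    unfolding K_def by (simp add: of_nat_diff)
  ultimately show False
    by (simp add: algebra_simps)
qed

lemma bid_double_ne_pred:
  assumes "10 \<le> x" and "1 \<le> k" and half_below: "\<forall>v < 2 * k. \<beta> v = v div 2" and "2 * k \<le> x"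
  shows "\<beta> (2 * k) \<noteq> k - 1"
proof
  assume pred: "\<beta> (2 * k) = k - 1"
  show False
  proof (cases "2 * k + 1 \<le> x")
    case True
    have "\<beta> (2 * k) \<le> \<beta> (2 * k + 1)"
      using True by (intro mono_onD[OF mono_on_bids]) auto
    then consider "\<beta> (2 * k + 1) = k - 1" | "\<beta> (2 * k + 1) = k" | "k + 1 \<le> \<beta> (2 * k + 1)"
      using pred by linarith
    then show False
    proof cases
      case 1
      with bid_double_Suc_ne_pred[OF assms(2) half_below True pred] show False by simp
    next
      case 2
      with count_below_Suc_bid[OF True, of \<beta>]
        no_bid_half_if_bid_double_pred[OF assms(2) half_below assms(4) pred]
      show False by simp
    next
      case 3
      have "\<beta> w + 1 < \<beta> (2 * k + 1)" if "w < 2 * k + 1" for w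
        using that half_below[rule_format, of w] pred 3 assms(2) by (cases "w = 2 * k") auto
      with no_bid_jump[OF True] 3 show False by simp
    qed
  next
    case False
    with assms(1,4) have "5 \<le> k" by simp
    with bid_double_ne_pred_of_five_le[OF _ half_below assms(4)] pred show False by simp
  qed
qed

text \<open>Unless some value above \<open>2k\<close> also bids \<open>k\<close>, the value \<open>2k\<close> would rather bid \<open>k - 1\<close>.\<close>

lemma bid_double_pooled:
  assumes "3 \<le> k" and half_below: "\<forall>v < 2 * k. \<beta> v = v div 2" and "2 * k \<le> x"
    and "\<beta> (2 * k) = k"
  shows "count_below x \<beta> (Suc k) \<noteq> 2 * k + 1"
proof
  assume top: "count_below x \<beta> (Suc k) = 2 * k + 1"
  define K where "K = real k"
  have "count_below x \<beta> k = 2 * k"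
    using half_below assms(3,4) by (intro count_below_eq_if_mono[OF mono_on_bids]) auto
  moreover have "(real (2 * k) - real (k - 1)) * (L (k - 1) + L (Suc (k - 1))) \<le>
      (real (2 * k) - real k) * (L k + L (Suc k))"
    using no_profitable_deviation[of "2 * k" "k - 1"] assms(3,4) by simp
  ultimately have "(K + 1) * (4 * K - 2) \<le> K * (4 * K + 1)"
    using count_below_half[OF half_below, of "k - 1"] top assms(1,3) unfolding K_def
    by (simp add: of_nat_diff algebra_simps)
  then have "K \<le> 2"
    by (simp add: algebra_simps)
  with assms(1) show False
    unfolding K_def by simp
qed

text \<open>The value \<open>2k + 1\<close> is kept from lowering its bid to \<open>k\<close> only if more than three
  further values pool at \<open>k + 1\<close>; then the value \<open>2k + 4\<close> prefers \<open>k + 2\<close>.\<close>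

lemma bid_double_Suc_ne_Suc_of_le_two:
  assumes "1 \<le> k" and "k \<le> 2" and half_below: "\<forall>v < 2 * k. \<beta> v = v div 2"
    and "2 * k + 1 \<le> x" and "\<beta> (2 * k) = k" and "\<beta> (2 * k + 1) = k + 1"
  shows False
proof -
  define K c where "K = real k" and "c = L (k + 2) - (2 * K + 1)"
  have "count_below x \<beta> k = 2 * k"
    using half_below assms(4,5) by (intro count_below_eq_if_mono[OF mono_on_bids]) auto
  moreover have "count_below x \<beta> (k + 1) = 2 * k + 1"
    using half_below assms(4-6)
    by (intro count_below_eq_if_mono[OF mono_on_bids]) (auto simp: less_Suc_eq)
  ultimately have L_half: "L k = 2 * K" "L (k + 1) = 2 * K + 1"
    unfolding K_def by simp_all
  have "(real (2 * k + 1) - real k) * (L k + L (Suc k)) \<le> real k * (L (k + 1) + L (Suc (k + 1)))"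
    using no_profitable_deviation[of "2 * k + 1" k] assms(4,6) by simp
  then have overbid: "(K + 1) * (4 * K + 1) \<le> K * (4 * K + 2 + c)"
    using L_half unfolding K_def c_def by (simp add: algebra_simps)
  have "3 < c"
  proof (rule ccontr)
    assume "\<not> 3 < c"
    then have "K * c \<le> K * 3"
      unfolding K_def by (intro mult_left_mono) auto
    with overbid show False by (simp add: algebra_simps)
  qed
  then have "2 * k + 1 + 3 < count_below x \<beta> (Suc (\<beta> (2 * k + 1)))"
    using assms(6) unfolding c_def K_def by simp
  then have "2 * k + 1 + 3 \<le> x \<and> \<beta> (2 * k + 1 + 3) = \<beta> (2 * k + 1)"
    by (rule pooling_if_count_below_Suc_gt[OF mono_on_bids assms(4)])
  then have "2 * k + 4 \<le> x" and pooled: "\<beta> (2 * k + 4) = k + 1"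
    using assms(6) by (simp_all add: add.commute)
  have "(real (2 * k + 4) - real (k + 2)) * (L (k + 2) + L (Suc (k + 2))) \<le>
      (real (2 * k + 4) - real (k + 1)) * (L (k + 1) + L (Suc (k + 1)))"
    using no_profitable_deviation[of "2 * k + 4" "k + 2"] \<open>2 * k + 4 \<le> x\<close> pooled by simp
  moreover have "(K + 2) * (2 * L (k + 2)) \<le> (K + 2) * (L (k + 2) + L (Suc (k + 2)))"
    using count_below_mono[of "k + 2" "Suc (k + 2)" x \<beta>] unfolding K_def
    by (intro mult_left_mono) auto
  ultimately have "(K + 2) * (2 * (2 * K + 1 + c)) \<le> (K + 3) * (4 * K + 2 + c)"
    using L_half unfolding K_def c_def by (simp add: algebra_simps)
  then have "(K + 1) * c \<le> 4 * K + 2"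
    by (simp add: algebra_simps)
  moreover have "K = 1 \<or> K = 2"
    using assms(1,2) unfolding K_def by auto
  ultimately show False
    using overbid \<open>3 < c\<close> by auto
qed

lemma bid_double_Suc_ne_Suc:
  assumes "1 \<le> k" and half_below: "\<forall>v < 2 * k. \<beta> v = v div 2"
    and "2 * k + 1 \<le> x" and "\<beta> (2 * k) = k"
  shows "\<beta> (2 * k + 1) \<noteq> k + 1"
proof
  assume "\<beta> (2 * k + 1) = k + 1"
  show False
  proof (cases "3 \<le> k")
    case True
    have "count_below x \<beta> (Suc k) = 2 * k + 1"
      using half_below assms(3,4) \<open>\<beta> (2 * k + 1) = k + 1\<close>
      by (intro count_below_eq_if_mono[OF mono_on_bids]) (auto simp: less_Suc_eq)
    with bid_double_pooled[OF True half_below _ assms(4)] assms(3) show False by simp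
  next
    case False
    with bid_double_Suc_ne_Suc_of_le_two[OF assms(1) _ half_below assms(3,4)]
      \<open>\<beta> (2 * k + 1) = k + 1\<close> show False by simp
  qed
qed

lemma bid_double:
  assumes "10 \<le> x" and half_below: "\<forall>v < 2 * k. \<beta> v = v div 2" and "2 * k \<le> x"
  shows "\<beta> (2 * k) = k"
proof (cases "k = 0")
  case True
  have "\<beta> 0 \<le> \<beta> 1"
    using assms(1) by (intro mono_onD[OF mono_on_bids]) auto
  with bid_less_value[of 1] assms(1) True show ?thesis by simp
next
  case False
  have "\<beta> (2 * k - 1) \<le> \<beta> (2 * k)"
    using assms(3) by (intro mono_onD[OF mono_on_bids]) auto
  moreover have "\<beta> (2 * k - 1) = k - 1"
    using half_below[rule_format, of "2 * k - 1"] False by simp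
  moreover have "\<beta> (2 * k) \<noteq> k - 1"
    using bid_double_ne_pred[OF assms(1) _ half_below assms(3)] False by simp
  moreover have "\<not> k + 1 \<le> \<beta> (2 * k)"
  proof
    assume jump: "k + 1 \<le> \<beta> (2 * k)"
    have "\<beta> w + 1 < \<beta> (2 * k)" if "w < 2 * k" for w
      using that half_below[rule_format, of w] jump by simp
    with no_bid_jump[OF assms(3)] jump False show False by simp
  qed
  ultimately show ?thesis by linarith
qed

lemma bid_double_Suc:
  assumes half_below: "\<forall>v < 2 * k. \<beta> v = v div 2" and "2 * k + 1 \<le> x" and "\<beta> (2 * k) = k"
  shows "\<beta> (2 * k + 1) = k"
proof (cases "k = 0")
  case True
  with bid_less_value[of 1] assms(2) show ?thesis by simp
next
  case False
  have "k \<le> \<beta> (2 * k + 1)"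
    using assms(2,3) mono_onD[OF mono_on_bids, of "2 * k" "2 * k + 1"] by simp
  moreover have "\<beta> (2 * k + 1) \<noteq> k + 1"
    using bid_double_Suc_ne_Suc[OF _ half_below assms(2,3)] False by simp
  moreover have "\<not> k + 2 \<le> \<beta> (2 * k + 1)"
  proof
    assume jump: "k + 2 \<le> \<beta> (2 * k + 1)"
    have "\<beta> w + 1 < \<beta> (2 * k + 1)" if "w < 2 * k + 1" for w
      using that half_below[rule_format, of w] assms(3) jump by (cases "w = 2 * k") auto
    with no_bid_jump[OF assms(2)] jump show False by simp
  qed
  ultimately show ?thesis by linarith
qed

lemma bid_half:
  assumes "10 \<le> x" and "v \<le> x"
  shows "\<beta> v = v div 2"
proof -
  have "\<forall>v < 2 * k. v \<le> x \<longrightarrow> \<beta> v = v div 2" for k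
  proof (induction k)
    case (Suc k)
    show ?case
    proof (intro allI impI)
      fix v assume "v < 2 * Suc k" "v \<le> x"
      consider "v < 2 * k" | "v = 2 * k" | "v = 2 * k + 1"
        using \<open>v < 2 * Suc k\<close> by fastforce
      then show "\<beta> v = v div 2"
      proof cases
        case 1
        with Suc.IH \<open>v \<le> x\<close> show ?thesis by simp
      next
        case 2
        with Suc.IH bid_double[OF assms(1)] \<open>v \<le> x\<close> show ?thesis by simp
      next
        case 3
        with Suc.IH bid_double[OF assms(1)] bid_double_Suc \<open>v \<le> x\<close> show ?thesis by simp
      qed
    qed
  qed simp
  from this[of "Suc v"] assms(2) show ?thesis by simp
qed

lemma odd_max_value:
  assumes "10 \<le> x"
  shows "odd x"
proof
  assume "even x"
  then obtain k where "x = 2 * k" ..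
  have "count_below x \<beta> (Suc k) = x + 1"
    using bid_half[OF assms] \<open>x = 2 * k\<close> by (intro count_below_all) auto
  with bid_double_pooled[of k] bid_half[OF assms] assms \<open>x = 2 * k\<close> show False by auto
qed

end

theorem mainTheorem20:
  fixes x :: nat
  assumes "x \<ge> 10"
  shows "(\<forall>\<beta>. symmetric_equilibrium x \<beta> \<longrightarrow> (\<forall>v\<le>x. \<beta> v = v div 2)) \<and>
         (even x \<longrightarrow> \<not> (\<exists>\<beta>. symmetric_equilibrium x \<beta>))"
  using symmetric_eq.bid_half[OF _ assms] symmetric_eq.odd_max_value[OF _ assms]
  unfolding symmetric_eq_def by blast

end
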